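(* Let $K$ be a finite simplicial complex, $N\subseteq K$ closed, and $\mathcal V_1,\mathcal V_2$ multivector fields on $K$. For $k\in\{1,2\}$ let $\mathcal M_k$ be a Morse decomposition of an isolated invariant set $S_k$ isolated by $N$ under $\mathcal V_k$, with Conley-Morse graph $G_k$, and let $G_{1,2}$ be the relevant Conley-Morse graph of the minimal Morse decomposition of $\mathrm{inv}_{\mathcal V_1\wedge\mathcal V_2}(N)$ under $\mathcal V_1\wedge\mathcal V_2$. Regard $G_1,G_2,G_{1,2}$ as simplicial complexes by ignoring edge orientations. Let $f_1:G_{1,2}\to G_1$ and $f_2:G_{1,2}\to G_2$ be the maps induced by $\iota_1,\iota_2$, i.e. $f_k(v)=\iota_k(v)$ on vertices and $f_k(\{u,v\})=\{\iota_k(u),\iota_k(v)\}$ on edges. Then $f_1$ and $f_2$ are simplicial maps.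
   Context: $\sigma\le\tau$ means $\sigma$ is a face of $\tau$; $\mathrm{cl}(A)$ is the set of faces of simplices of $A$; closed means $A=\mathrm{cl}(A)$. A multivector is a convex subset of $K$ w.r.t. $\le$; a multivector field is a partition of $K$ into multivectors; $[\sigma]_{\mathcal V}$ is the multivector containing $\sigma$. The intersection field is $\mathcal V_1\wedge\mathcal V_2=\{V_1\cap V_2: V_i\in\mathcal V_i\}$ (empty sets discarded). $F_{\mathcal V}(\sigma)=[\sigma]_{\mathcal V}\cup\mathrm{cl}(\sigma)$. A path under $\mathcal V$ is a sequence $\rho:\mathbb Z\cap[a,b]\to K$ with $\rho(i)\in F_{\mathcal V}(\rho(i-1))$; a solution is a bi-infinite such sequence. A multivector $V$ is critical if $H_k(\mathrm{cl}(V),\mathrm{cl}(V)\setminus V)\ne0$ for some $k$, regular otherwise. A solution $\rho$ is essential if whenever $[\rho(i)]_{\mathcal V}$ is regular there are $i^-<i<i^+$ with $[\rho(i^\pm)]_{\mathcal V}\neq[\rho(i)]_{\mathcal V}$. $\mathrm{inv}_{\mathcal V}(A)$ is the set of simplices of $A$ lying on essential solutions with image in $A$. An invariant set $S$ ($\mathrm{inv}(S)=S$) is isolated by closed $N$ if $S$ is a union of multivectors and every path in $N$ with both endpoints in $S$ lies in $S$. A Morse decomposition of $S$ is a family of mutually disjoint isolated invariant subsets (Morse sets) of $S$, indexed by a finite poset, such that every essential solution in $S$ either lies in one Morse set or has its $\alpha$-limit set in $M_q$ and $\omega$-limit set in $M_p$ with $q>p$. $S$ is minimal if $\{S\}$ is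 its only Morse decomposition; a Morse decomposition is minimal if all its Morse sets are minimal. A connection under $\mathcal V$ from $M$ to $M'$ is a path $\rho:\mathbb Z\cap[a,b]\to N$ under $\mathcal V$ with $\rho(a)\in M$, $\rho(b)\in M'$. The Conley-Morse graph of a Morse decomposition has one vertex per Morse set and a directed edge $M\to M'$ iff there is a connection from $M$ to $M'$. A Morse set $M_{1,2}$ of the minimal Morse decomposition $\mathcal M_{1,2}$ of $\mathrm{inv}_{\mathcal V_1\wedge\mathcal V_2}(N)$ is relevant if it is contained in some Morse set of $\mathcal M_1$ and in some Morse set of $\mathcal M_2$; then $\iota_k(M_{1,2})$ is the Morse set of $\mathcal M_k$ containing it. A relevant connection from relevant $M_{1,2}$ to relevant $M'_{1,2}$ is a connection $\rho$ under $\mathcal V_1\wedge\mathcal V_2$ from $M_{1,2}$ to $M'_{1,2}$ such that for $k=1,2$, whenever $\rho(i)$ lies in a Morse set $M_k\in\mathcal M_k$, $M_k\in\{\iota_k(M_{1,2}),\iota_k(M'_{1,2})\}$. The relevant Conley-Morse graph $G_{1,2}$ has the relevant Morse sets as vertices and a directed edge $M_{1,2}\to M'_{1,2}$ iff there is a relevant connection from $M_{1,2}$ to $M'_{1,2}$. A simplicial map is a vertex map sending each simplex to a simplex (an edge to an edge or a vertex). *)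

theory Defs
  imports Main
begin

definition simplicial_complex :: "'a set set \<Rightarrow> bool" where
  "simplicial_complex K \<longleftrightarrow>
     (\<forall>\<sigma>\<in>K. finite \<sigma> \<and> \<sigma> \<noteq> {}) \<and>
     (\<forall>\<sigma>\<in>K. \<forall>\<tau>. \<tau> \<noteq> {} \<and> \<tau> \<subseteq> \<sigma> \<longrightarrow> \<tau> \<in> K)"

definition cl :: "'a set set \<Rightarrow> 'a set set" where
  "cl A = {\<tau>. \<tau> \<noteq> {} \<and> (\<exists>\<sigma>\<in>A. \<tau> \<subseteq> \<sigma>)}"

definition is_closed :: "'a set set \<Rightarrow> bool" where
  "is_closed A \<longleftrightarrow> A = cl A"

definition simplicial_map :: "('a \<Rightarrow> 'b) \<Rightarrow> 'a set set \<Rightarrow> 'b set set \<Rightarrow> bool" where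
  "simplicial_map f K L \<longleftrightarrow> (\<forall>\<sigma>\<in>K. f ` \<sigma> \<in> L)"

text \<open>Orientation: the vertices of a simplex are ordered by the linear order on vertices.
  The incidence number of a codimension-one face \<open>\<rho> = \<tau> - {v}\<close> in \<open>\<tau>\<close> is
  \<open>(-1)^j\<close>, where \<open>j\<close> is the position of \<open>v\<close> in \<open>\<tau>\<close>.\<close>

definition incidence :: "'a::linorder set \<Rightarrow> 'a set \<Rightarrow> int" where
  "incidence \<tau> \<rho> =
     (if finite \<tau> \<and> \<rho> \<subseteq> \<tau> \<and> card \<tau> = card \<rho> + 1
      then (-1) ^ card {w\<in>\<tau>. w < the_elem (\<tau> - \<rho>)} else 0)"

definition is_chain :: "'a set set \<Rightarrow> nat \<Rightarrow> ('a set \<Rightarrow> int) \<Rightarrow> bool" where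
  "is_chain X k c \<longleftrightarrow> (\<forall>\<sigma>. c \<sigma> \<noteq> 0 \<longrightarrow> \<sigma> \<in> X \<and> card \<sigma> = k + 1)"

text \<open>Boundary in the relative chain complex \<open>C(cl V)/C(cl V - V)\<close>, which has
  the simplices of \<open>V\<close> as basis: the ordinary boundary projected onto \<open>V\<close>.\<close>
definition rel_boundary :: "'a::linorder set set \<Rightarrow> ('a set \<Rightarrow> int) \<Rightarrow> 'a set \<Rightarrow> int" where
  "rel_boundary V c \<rho> = (if \<rho> \<in> V then (\<Sum>\<sigma>\<in>V. c \<sigma> * incidence \<sigma> \<rho>) else 0)"

text \<open>\<open>H_k(cl V, cl V - V) \<noteq> 0\<close>: some relative \<open>k\<close>-cycle is not a relative boundary.\<close>
definition rel_homology_nonzero :: "'a::linorder set set \<Rightarrow> nat \<Rightarrow> bool" where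
  "rel_homology_nonzero V k \<longleftrightarrow>
     (\<exists>c. is_chain V k c \<and> rel_boundary V c = (\<lambda>_. 0) \<and>
          \<not> (\<exists>d. is_chain V (k + 1) d \<and> c = rel_boundary V d))"

definition critical :: "'a::linorder set set \<Rightarrow> bool" where
  "critical V \<longleftrightarrow> (\<exists>k. rel_homology_nonzero V k)"

definition regular :: "'a::linorder set set \<Rightarrow> bool" where
  "regular V \<longleftrightarrow> \<not> critical V"

definition multivector :: "'a set set \<Rightarrow> 'a set set \<Rightarrow> bool" where
  "multivector K V \<longleftrightarrow> V \<subseteq> K \<and>
     (\<forall>\<sigma>\<in>V. \<forall>\<tau>\<in>V. \<forall>\<rho>\<in>K. \<sigma> \<subseteq> \<rho> \<and> \<rho> \<subseteq> \<tau> \<longrightarrow> \<rho> \<in> V)"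

definition mv_field :: "'a set set \<Rightarrow> 'a set set set \<Rightarrow> bool" where
  "mv_field K \<V> \<longleftrightarrow>
     (\<forall>V\<in>\<V>. V \<noteq> {} \<and> multivector K V) \<and>
     (\<forall>V\<in>\<V>. \<forall>W\<in>\<V>. V \<noteq> W \<longrightarrow> V \<inter> W = {}) \<and>
     \<Union>\<V> = K"

definition mvc :: "'a set set set \<Rightarrow> 'a set \<Rightarrow> 'a set set" where
  "mvc \<V> \<sigma> = (THE V. V \<in> \<V> \<and> \<sigma> \<in> V)"

definition inter_field :: "'a set set set \<Rightarrow> 'a set set set \<Rightarrow> 'a set set set" where
  "inter_field \<V>1 \<V>2 = {V1 \<inter> V2 | V1 V2. V1 \<in> \<V>1 \<and> V2 \<in> \<V>2 \<and> V1 \<inter> V2 \<noteq> {}}"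

definition Fmap :: "'a set set set \<Rightarrow> 'a set \<Rightarrow> 'a set set" where
  "Fmap \<V> \<sigma> = mvc \<V> \<sigma> \<union> cl {\<sigma>}"

text \<open>A path \<open>\<rho> : \<int> \<inter> [a,b] \<rightarrow> K\<close> (values outside \<open>[a,b]\<close> are irrelevant).\<close>
definition is_path :: "'a set set \<Rightarrow> 'a set set set \<Rightarrow> (int \<Rightarrow> 'a set) \<Rightarrow> int \<Rightarrow> int \<Rightarrow> bool" where
  "is_path K \<V> \<rho> a b \<longleftrightarrow> a \<le> b \<and> \<rho> ` {a..b} \<subseteq> K \<and>
     (\<forall>i. a < i \<and> i \<le> b \<longrightarrow> \<rho> i \<in> Fmap \<V> (\<rho> (i - 1)))"

definition is_solution :: "'a set set \<Rightarrow> 'a set set set \<Rightarrow> (int \<Rightarrow> 'a set) \<Rightarrow> bool" where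
  "is_solution K \<V> \<rho> \<longleftrightarrow> range \<rho> \<subseteq> K \<and> (\<forall>i. \<rho> i \<in> Fmap \<V> (\<rho> (i - 1)))"

definition essential :: "'a::linorder set set \<Rightarrow> 'a set set set \<Rightarrow> (int \<Rightarrow> 'a set) \<Rightarrow> bool" where
  "essential K \<V> \<rho> \<longleftrightarrow> is_solution K \<V> \<rho> \<and>
     (\<forall>i. regular (mvc \<V> (\<rho> i)) \<longrightarrow>
        (\<exists>i1 i2. i1 < i \<and> i < i2 \<and> mvc \<V> (\<rho> i1) \<noteq> mvc \<V> (\<rho> i) \<and>
                 mvc \<V> (\<rho> i2) \<noteq> mvc \<V> (\<rho> i)))"

definition inv :: "'a::linorder set set \<Rightarrow> 'a set set set \<Rightarrow> 'a set set \<Rightarrow> 'a set set" where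
  "inv K \<V> A = {\<sigma>\<in>A. \<exists>\<rho>. essential K \<V> \<rho> \<and> range \<rho> \<subseteq> A \<and> \<sigma> \<in> range \<rho>}"

definition isolated_by :: "'a::linorder set set \<Rightarrow> 'a set set set \<Rightarrow> 'a set set \<Rightarrow> 'a set set \<Rightarrow> bool" where
  "isolated_by K \<V> N S \<longleftrightarrow>
     N \<subseteq> K \<and> is_closed N \<and> S \<subseteq> N \<and> inv K \<V> S = S \<and>
     (\<exists>\<W>\<subseteq>\<V>. S = \<Union>\<W>) \<and>
     (\<forall>\<rho> a b. is_path K \<V> \<rho> a b \<and> \<rho> ` {a..b} \<subseteq> N \<and> \<rho> a \<in> S \<and> \<rho> b \<in> S
        \<longrightarrow> \<rho> ` {a..b} \<subseteq> S)"

definition isolated_invariant :: "'a::linorder set set \<Rightarrow> 'a set set set \<Rightarrow> 'a set set \<Rightarrow> bool" where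
  "isolated_invariant K \<V> S \<longleftrightarrow> (\<exists>N. isolated_by K \<V> N S)"

definition mv_hull :: "'a set set set \<Rightarrow> 'a set set \<Rightarrow> 'a set set" where
  "mv_hull \<V> A = \<Union>{V\<in>\<V>. V \<inter> A \<noteq> {}}"

definition alpha_limit :: "'a set set set \<Rightarrow> (int \<Rightarrow> 'a set) \<Rightarrow> 'a set set" where
  "alpha_limit \<V> \<rho> = (\<Inter>t. mv_hull \<V> (\<rho> ` {..t}))"

definition omega_limit :: "'a set set set \<Rightarrow> (int \<Rightarrow> 'a set) \<Rightarrow> 'a set set" where
  "omega_limit \<V> \<rho> = (\<Inter>t. mv_hull \<V> (\<rho> ` {t..}))"

text \<open>A Morse decomposition of \<open>S\<close>: a finite family \<open>\<M>\<close> of nonempty, mutually disjoint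
  isolated invariant subsets of \<open>S\<close>, partially ordered by \<open>le\<close> (the family indexes itself).\<close>
definition morse_decomposition ::
  "'a::linorder set set \<Rightarrow> 'a set set set \<Rightarrow> 'a set set \<Rightarrow> 'a set set set
     \<Rightarrow> ('a set set \<Rightarrow> 'a set set \<Rightarrow> bool) \<Rightarrow> bool" where
  "morse_decomposition K \<V> S \<M> le \<longleftrightarrow>
     finite \<M> \<and>
     (\<forall>M\<in>\<M>. le M M) \<and>
     (\<forall>M\<in>\<M>. \<forall>M'\<in>\<M>. le M M' \<and> le M' M \<longrightarrow> M = M') \<and>
     (\<forall>M\<in>\<M>. \<forall>M'\<in>\<M>. \<forall>M''\<in>\<M>. le M M' \<and> le M' M'' \<longrightarrow> le M M'') \<and>
     (\<forall>M\<in>\<M>. M \<noteq> {} \<and> M \<subseteq> S \<and> isolated_invariant K \<V> M) \<and>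
     (\<forall>M\<in>\<M>. \<forall>M'\<in>\<M>. M \<noteq> M' \<longrightarrow> M \<inter> M' = {}) \<and>
     (\<forall>\<rho>. essential K \<V> \<rho> \<and> range \<rho> \<subseteq> S \<longrightarrow>
        (\<exists>M\<in>\<M>. range \<rho> \<subseteq> M) \<or>
        (\<exists>Mq\<in>\<M>. \<exists>Mp\<in>\<M>. alpha_limit \<V> \<rho> \<subseteq> Mq \<and> omega_limit \<V> \<rho> \<subseteq> Mp \<and>
                          le Mp Mq \<and> Mp \<noteq> Mq))"

definition minimal_set :: "'a::linorder set set \<Rightarrow> 'a set set set \<Rightarrow> 'a set set \<Rightarrow> bool" where
  "minimal_set K \<V> S \<longleftrightarrow> (\<forall>\<M> le. morse_decomposition K \<V> S \<M> le \<longrightarrow> \<M> = {S})"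

definition minimal_morse_decomposition ::
  "'a::linorder set set \<Rightarrow> 'a set set set \<Rightarrow> 'a set set \<Rightarrow> 'a set set set
     \<Rightarrow> ('a set set \<Rightarrow> 'a set set \<Rightarrow> bool) \<Rightarrow> bool" where
  "minimal_morse_decomposition K \<V> S \<M> le \<longleftrightarrow>
     morse_decomposition K \<V> S \<M> le \<and> (\<forall>M\<in>\<M>. minimal_set K \<V> M)"

definition connection ::
  "'a set set \<Rightarrow> 'a set set set \<Rightarrow> 'a set set \<Rightarrow> 'a set set \<Rightarrow> 'a set set \<Rightarrow> bool" where
  "connection K \<V> N M M' \<longleftrightarrow>
     (\<exists>\<rho> a b. is_path K \<V> \<rho> a b \<and> \<rho> ` {a..b} \<subseteq> N \<and> \<rho> a \<in> M \<and> \<rho> b \<in> M')"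

definition cm_edges ::
  "'a set set \<Rightarrow> 'a set set set \<Rightarrow> 'a set set \<Rightarrow> 'a set set set \<Rightarrow> ('a set set \<times> 'a set set) set" where
  "cm_edges K \<V> N \<M> = {(M, M'). M \<in> \<M> \<and> M' \<in> \<M> \<and> connection K \<V> N M M'}"

definition relevant :: "'a set set set \<Rightarrow> 'a set set set \<Rightarrow> 'a set set \<Rightarrow> bool" where
  "relevant \<M>1 \<M>2 M \<longleftrightarrow> (\<exists>M1\<in>\<M>1. M \<subseteq> M1) \<and> (\<exists>M2\<in>\<M>2. M \<subseteq> M2)"

definition iota :: "'a set set set \<Rightarrow> 'a set set \<Rightarrow> 'a set set" where
  "iota \<M> M = (THE M'. M' \<in> \<M> \<and> M \<subseteq> M')"

definition relevant_connection ::
  "'a set set \<Rightarrow> 'a set set set \<Rightarrow> 'a set set set \<Rightarrow> 'a set set \<Rightarrow> 'a set set set \<Rightarrow> 'a set set set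
     \<Rightarrow> 'a set set \<Rightarrow> 'a set set \<Rightarrow> bool" where
  "relevant_connection K \<V>1 \<V>2 N \<M>1 \<M>2 M M' \<longleftrightarrow>
     (\<exists>\<rho> a b. is_path K (inter_field \<V>1 \<V>2) \<rho> a b \<and> \<rho> ` {a..b} \<subseteq> N \<and>
        \<rho> a \<in> M \<and> \<rho> b \<in> M' \<and>
        (\<forall>i\<in>{a..b}.
           (\<forall>M1\<in>\<M>1. \<rho> i \<in> M1 \<longrightarrow> M1 \<in> {iota \<M>1 M, iota \<M>1 M'}) \<and>
           (\<forall>M2\<in>\<M>2. \<rho> i \<in> M2 \<longrightarrow> M2 \<in> {iota \<M>2 M, iota \<M>2 M'})))"

definition relevant_vertices :: "'a set set set \<Rightarrow> 'a set set set \<Rightarrow> 'a set set set \<Rightarrow> 'a set set set" where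
  "relevant_vertices \<M>1 \<M>2 \<M>12 = {M\<in>\<M>12. relevant \<M>1 \<M>2 M}"

definition relevant_cm_edges ::
  "'a set set \<Rightarrow> 'a set set set \<Rightarrow> 'a set set set \<Rightarrow> 'a set set \<Rightarrow> 'a set set set \<Rightarrow> 'a set set set
     \<Rightarrow> 'a set set set \<Rightarrow> ('a set set \<times> 'a set set) set" where
  "relevant_cm_edges K \<V>1 \<V>2 N \<M>1 \<M>2 \<M>12 =
     {(M, M'). M \<in> relevant_vertices \<M>1 \<M>2 \<M>12 \<and> M' \<in> relevant_vertices \<M>1 \<M>2 \<M>12 \<and>
               relevant_connection K \<V>1 \<V>2 N \<M>1 \<M>2 M M'}"

text \<open>A directed graph regarded as a simplicial complex, ignoring orientation (and loops).\<close>
definition graph_complex :: "'v set \<Rightarrow> ('v \<times> 'v) set \<Rightarrow> 'v set set" where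
  "graph_complex Vs E = {{v} | v. v \<in> Vs} \<union>
     {{u, v} | u v. u \<in> Vs \<and> v \<in> Vs \<and> u \<noteq> v \<and> ((u, v) \<in> E \<or> (v, u) \<in> E)}"

end

theory Submission
  imports Defs
begin

text \<open>Every multivector of \<open>\<V>\<^sub>1 \<and> \<V>\<^sub>2\<close> lies inside a multivector of \<open>\<V>\<^sub>1\<close>, so every path
  under the intersection field is a path under \<open>\<V>\<^sub>1\<close>; and every relevant Morse set lies in
  a unique Morse set \<open>\<iota>\<^sub>1(M)\<close>, because Morse sets are disjoint. Hence a relevant connection from
  \<open>M\<close> to \<open>M'\<close> is a connection under \<open>\<V>\<^sub>1\<close> from \<open>\<iota>\<^sub>1(M)\<close> to \<open>\<iota>\<^sub>1(M')\<close>: \<open>\<iota>\<^sub>1\<close> maps every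
  edge of \<open>G\<^sub>1\<^sub>,\<^sub>2\<close> to an edge or a vertex of \<open>G\<^sub>1\<close>. The case \<open>k = 2\<close> is symmetric.
  Of the hypotheses, only the disjointness of the Morse sets of \<open>\<M>\<^sub>k\<close> and the nonemptiness of
  those of \<open>\<M>\<^sub>1\<^sub>,\<^sub>2\<close> are needed.\<close>

lemma mv_field_unique:
  assumes "mv_field K \<V>" "V \<in> \<V>" "W \<in> \<V>" "\<sigma> \<in> V" "\<sigma> \<in> W"
  shows "V = W"
  using assms unfolding mv_field_def by blast

lemma mv_field_covers:
  assumes "mv_field K \<V>" "\<sigma> \<in> K"
  obtains V where "V \<in> \<V>" "\<sigma> \<in> V"
proof -
  have "\<Union>\<V> = K" using assms(1) unfolding mv_field_def by (elim conjE)
  then show ?thesis using assms(2) that by blast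
qed

lemma mvc_eqI:
  assumes "mv_field K \<V>" "V \<in> \<V>" "\<sigma> \<in> V"
  shows "mvc \<V> \<sigma> = V"
  unfolding mvc_def
proof (rule the_equality)
  show "V \<in> \<V> \<and> \<sigma> \<in> V" using assms(2,3) ..
next
  fix W assume "W \<in> \<V> \<and> \<sigma> \<in> W"
  then show "W = V" using mv_field_unique[OF assms(1) _ assms(2) _ assms(3)] by blast
qed

lemma inter_field_commute: "inter_field \<V>1 \<V>2 = inter_field \<V>2 \<V>1"
  unfolding inter_field_def by blast

lemma mvc_inter_field:
  assumes "mv_field K \<V>1" "mv_field K \<V>2" "\<sigma> \<in> K"
  shows "mvc (inter_field \<V>1 \<V>2) \<sigma> = mvc \<V>1 \<sigma> \<inter> mvc \<V>2 \<sigma>"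
proof -
  obtain V1 where V1: "V1 \<in> \<V>1" "\<sigma> \<in> V1" using mv_field_covers[OF assms(1,3)] .
  obtain V2 where V2: "V2 \<in> \<V>2" "\<sigma> \<in> V2" using mv_field_covers[OF assms(2,3)] .
  have "mvc (inter_field \<V>1 \<V>2) \<sigma> = V1 \<inter> V2"
    unfolding mvc_def
  proof (rule the_equality)
    show "V1 \<inter> V2 \<in> inter_field \<V>1 \<V>2 \<and> \<sigma> \<in> V1 \<inter> V2"
      using V1 V2 unfolding inter_field_def by blast
  next
    fix V assume "V \<in> inter_field \<V>1 \<V>2 \<and> \<sigma> \<in> V"
    then obtain W1 W2 where "V = W1 \<inter> W2" "W1 \<in> \<V>1" "W2 \<in> \<V>2" "\<sigma> \<in> W1" "\<sigma> \<in> W2"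
      unfolding inter_field_def by blast
    then show "V = V1 \<inter> V2"
      using mv_field_unique[OF assms(1) _ V1(1) _ V1(2)] mv_field_unique[OF assms(2) _ V2(1) _ V2(2)] by blast
  qed
  then show ?thesis using mvc_eqI[OF assms(1) V1] mvc_eqI[OF assms(2) V2] by simp
qed

lemma Fmap_inter_field_subset:
  assumes "mv_field K \<V>1" "mv_field K \<V>2" "\<sigma> \<in> K"
  shows "Fmap (inter_field \<V>1 \<V>2) \<sigma> \<subseteq> Fmap \<V>1 \<sigma>"
  unfolding Fmap_def using mvc_inter_field[OF assms] by blast

lemma is_path_inter_field:
  assumes "mv_field K \<V>1" "mv_field K \<V>2" "is_path K (inter_field \<V>1 \<V>2) \<rho> a b"
  shows "is_path K \<V>1 \<rho> a b"
  unfolding is_path_def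
proof (intro conjI allI impI)
  show "a \<le> b" "\<rho> ` {a..b} \<subseteq> K" using assms(3) unfolding is_path_def by auto
next
  fix i assume i: "a < i \<and> i \<le> b"
  then have "\<rho> (i - 1) \<in> K" and "\<rho> i \<in> Fmap (inter_field \<V>1 \<V>2) (\<rho> (i - 1))"
    using assms(3) unfolding is_path_def by auto
  then show "\<rho> i \<in> Fmap \<V>1 (\<rho> (i - 1))"
    using Fmap_inter_field_subset[OF assms(1,2)] by blast
qed

lemma connection_inter_field:
  assumes "mv_field K \<V>1" "mv_field K \<V>2" "connection K (inter_field \<V>1 \<V>2) N M M'"
  shows "connection K \<V>1 N M M'"
proof -
  obtain \<rho> a b where "is_path K (inter_field \<V>1 \<V>2) \<rho> a b" "\<rho> ` {a..b} \<subseteq> N" "\<rho> a \<in> M" "\<rho> b \<in> M'"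
    using assms(3) unfolding connection_def by blast
  with is_path_inter_field[OF assms(1,2)] show ?thesis unfolding connection_def by blast
qed

lemma connection_mono:
  assumes "connection K \<V> N M M'" "M \<subseteq> A" "M' \<subseteq> B"
  shows "connection K \<V> N A B"
proof -
  obtain \<rho> a b where path: "is_path K \<V> \<rho> a b" "\<rho> ` {a..b} \<subseteq> N"
    and ends: "\<rho> a \<in> M" "\<rho> b \<in> M'"
    using assms(1) unfolding connection_def by blast
  from ends assms(2,3) have "\<rho> a \<in> A" "\<rho> b \<in> B" by auto
  with path show ?thesis unfolding connection_def by blast
qed

lemma relevant_connection_imp_connection:
  assumes "relevant_connection K \<V>1 \<V>2 N \<M>1 \<M>2 M M'"
  shows "connection K (inter_field \<V>1 \<V>2) N M M'"
  using assms unfolding relevant_connection_def connection_def by (elim exE conjE) blast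

lemma relevant_vertices_commute:
  "relevant_vertices \<M>2 \<M>1 \<M>12 = relevant_vertices \<M>1 \<M>2 \<M>12"
  unfolding relevant_vertices_def relevant_def by blast

lemma relevant_connection_commute:
  "relevant_connection K \<V>2 \<V>1 N \<M>2 \<M>1 M M' = relevant_connection K \<V>1 \<V>2 N \<M>1 \<M>2 M M'"
  unfolding relevant_connection_def inter_field_commute[of \<V>2 \<V>1]
  by (simp only: ball_conj_distrib conj_ac)

lemma relevant_cm_edges_commute:
  "relevant_cm_edges K \<V>2 \<V>1 N \<M>2 \<M>1 \<M>12 = relevant_cm_edges K \<V>1 \<V>2 N \<M>1 \<M>2 \<M>12"
  \<comment> \<open>the commutation rules are permutative; instantiating them keeps \<open>unfolding\<close> from looping\<close>
  unfolding relevant_cm_edges_def relevant_vertices_commute[of \<M>2]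
    relevant_connection_commute[of K \<V>2 \<V>1 N \<M>2 \<M>1] ..

lemma morse_decomposition_disjoint:
  assumes "morse_decomposition K \<V> S \<M> le"
  shows "pairwise disjnt \<M>"
proof -
  have "\<forall>M\<in>\<M>. \<forall>M'\<in>\<M>. M \<noteq> M' \<longrightarrow> M \<inter> M' = {}"
    using assms unfolding morse_decomposition_def by (elim conjE)
  then show ?thesis unfolding pairwise_def disjnt_def by blast
qed

lemma morse_decomposition_nonempty:
  assumes "morse_decomposition K \<V> S \<M> le"
  shows "{} \<notin> \<M>"
proof -
  have "\<forall>M\<in>\<M>. M \<noteq> {} \<and> M \<subseteq> S \<and> isolated_invariant K \<V> M"
    using assms unfolding morse_decomposition_def by (elim conjE)
  then show ?thesis by blast
qed

lemma iota_eqI: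
  assumes "pairwise disjnt \<M>" "M \<noteq> {}" "M1 \<in> \<M>" "M \<subseteq> M1"
  shows "iota \<M> M = M1"
  unfolding iota_def
proof (rule the_equality)
  show "M1 \<in> \<M> \<and> M \<subseteq> M1" using assms(3,4) ..
next
  fix M' assume "M' \<in> \<M> \<and> M \<subseteq> M'"
  then show "M' = M1" using assms unfolding pairwise_def disjnt_def by blast
qed

lemma iota_relevant:
  assumes "pairwise disjnt \<M>1" "{} \<notin> \<M>12" "M \<in> relevant_vertices \<M>1 \<M>2 \<M>12"
  shows "iota \<M>1 M \<in> \<M>1" "M \<subseteq> iota \<M>1 M"
proof -
  obtain M1 where "M1 \<in> \<M>1" "M \<subseteq> M1" "M \<noteq> {}"
    using assms(2,3) unfolding relevant_vertices_def relevant_def by blast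
  with iota_eqI[OF assms(1)] show "iota \<M>1 M \<in> \<M>1" "M \<subseteq> iota \<M>1 M" by simp_all
qed

lemma simplicial_map_graph_complexI:
  assumes "f ` Vs \<subseteq> Ws"
    and "\<And>u v. (u, v) \<in> E \<Longrightarrow> u \<in> Vs \<Longrightarrow> v \<in> Vs \<Longrightarrow> f u \<noteq> f v \<Longrightarrow> (f u, f v) \<in> F"
  shows "simplicial_map f (graph_complex Vs E) (graph_complex Ws F)"
  unfolding simplicial_map_def
proof
  fix \<sigma> assume "\<sigma> \<in> graph_complex Vs E"
  then consider (vertex) v where "\<sigma> = {v}" "v \<in> Vs"
    | (edge) u v where "\<sigma> = {u, v}" "u \<in> Vs" "v \<in> Vs" "(u, v) \<in> E \<or> (v, u) \<in> E"
    unfolding graph_complex_def by blast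
  then show "f ` \<sigma> \<in> graph_complex Ws F"
  proof cases
    case vertex
    then show ?thesis using assms(1) unfolding graph_complex_def by blast
  next
    case edge
    show ?thesis
    proof (cases "f u = f v")
      case True
      then show ?thesis using edge assms(1) unfolding graph_complex_def by auto
    next
      case False
      then have "(f u, f v) \<in> F \<or> (f v, f u) \<in> F" using edge assms(2) by metis
      then show ?thesis using False edge assms(1) unfolding graph_complex_def by blast
    qed
  qed
qed

lemma iota_simplicial_map:
  assumes "mv_field K \<V>1" "mv_field K \<V>2" "pairwise disjnt \<M>1" "{} \<notin> \<M>12"
  shows "simplicial_map (iota \<M>1)
           (graph_complex (relevant_vertices \<M>1 \<M>2 \<M>12) (relevant_cm_edges K \<V>1 \<V>2 N \<M>1 \<M>2 \<M>12))
           (graph_complex \<M>1 (cm_edges K \<V>1 N \<M>1))"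
proof (rule simplicial_map_graph_complexI)
  show "iota \<M>1 ` relevant_vertices \<M>1 \<M>2 \<M>12 \<subseteq> \<M>1"
    using iota_relevant(1)[OF assms(3,4)] by blast
next
  fix M M' assume edge: "(M, M') \<in> relevant_cm_edges K \<V>1 \<V>2 N \<M>1 \<M>2 \<M>12"
    and M: "M \<in> relevant_vertices \<M>1 \<M>2 \<M>12" and M': "M' \<in> relevant_vertices \<M>1 \<M>2 \<M>12"
  have "connection K (inter_field \<V>1 \<V>2) N M M'"
    using edge relevant_connection_imp_connection unfolding relevant_cm_edges_def by blast
  then have "connection K \<V>1 N M M'" using connection_inter_field[OF assms(1,2)] by blast
  then have "connection K \<V>1 N (iota \<M>1 M) (iota \<M>1 M')"
    using connection_mono iota_relevant(2)[OF assms(3,4)] M M' by blast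
  then show "(iota \<M>1 M, iota \<M>1 M') \<in> cm_edges K \<V>1 N \<M>1"
    unfolding cm_edges_def using iota_relevant(1)[OF assms(3,4)] M M' by blast
qed

theorem proposition25:
  fixes K :: "'a::linorder set set"
    and N S1 S2 :: "'a set set"
    and \<V>1 \<V>2 :: "'a set set set"
    and \<M>1 \<M>2 \<M>12 :: "'a set set set"
    and le1 le2 le12 :: "'a set set \<Rightarrow> 'a set set \<Rightarrow> bool"
  assumes "finite K" and "simplicial_complex K"
    and "N \<subseteq> K" and "is_closed N"
    and "mv_field K \<V>1" and "mv_field K \<V>2"
    and "isolated_by K \<V>1 N S1" and "morse_decomposition K \<V>1 S1 \<M>1 le1"
    and "isolated_by K \<V>2 N S2" and "morse_decomposition K \<V>2 S2 \<M>2 le2"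
    and "minimal_morse_decomposition K (inter_field \<V>1 \<V>2)
           (inv K (inter_field \<V>1 \<V>2) N) \<M>12 le12"
  shows "simplicial_map (iota \<M>1)
           (graph_complex (relevant_vertices \<M>1 \<M>2 \<M>12) (relevant_cm_edges K \<V>1 \<V>2 N \<M>1 \<M>2 \<M>12))
           (graph_complex \<M>1 (cm_edges K \<V>1 N \<M>1))
       \<and> simplicial_map (iota \<M>2)
           (graph_complex (relevant_vertices \<M>1 \<M>2 \<M>12) (relevant_cm_edges K \<V>1 \<V>2 N \<M>1 \<M>2 \<M>12))
           (graph_complex \<M>2 (cm_edges K \<V>2 N \<M>2))"
proof
  have "morse_decomposition K (inter_field \<V>1 \<V>2) (inv K (inter_field \<V>1 \<V>2) N) \<M>12 le12"
    using assms(11) unfolding minimal_morse_decomposition_def by (rule conjunct1)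
  then have nonempty: "{} \<notin> \<M>12" by (rule morse_decomposition_nonempty)
  show "simplicial_map (iota \<M>1)
      (graph_complex (relevant_vertices \<M>1 \<M>2 \<M>12) (relevant_cm_edges K \<V>1 \<V>2 N \<M>1 \<M>2 \<M>12))
      (graph_complex \<M>1 (cm_edges K \<V>1 N \<M>1))"
    by (rule iota_simplicial_map[OF assms(5,6) morse_decomposition_disjoint[OF assms(8)] nonempty])
  show "simplicial_map (iota \<M>2)
      (graph_complex (relevant_vertices \<M>1 \<M>2 \<M>12) (relevant_cm_edges K \<V>1 \<V>2 N \<M>1 \<M>2 \<M>12))
      (graph_complex \<M>2 (cm_edges K \<V>2 N \<M>2))"
    using iota_simplicial_map[OF assms(6,5) morse_decomposition_disjoint[OF assms(10)] nonempty]
    unfolding relevant_vertices_commute[of \<M>2] relevant_cm_edges_commute[of K \<V>2] .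
qed

end
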